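(* Let $p$ be an odd prime. Let $\mathcal{L}=(L_1,\dots,L_m)$ be a square-independent system of linear forms in $d$ variables over $\mathbb{F}_p$, whose linear span has dimension $d'$. Let $\Gamma_1:\mathbb{F}_p^n\to\mathbb{F}_p^{d_1}$ be a surjective linear map and let $\Gamma_2:\mathbb{F}_p^n\to\mathbb{F}_p^{d_2}$ be a quadratic map of rank at least $r$. Let $a_1,\dots,a_m\in\mathbb{F}_p^{d_1}$ and $b_1,\dots,b_m\in\mathbb{F}_p^{d_2}$. Let $Z$ be the subspace of $(\mathbb{F}_p^{d_1})^m$ consisting of all $(c_1,\dots,c_m)$ with $\sum_i\mu_ic_i=0$ whenever $\mu\in\mathbb{F}_p^m$ satisfies $\sum_i\mu_iL_i=0$. If $\mathbf{x}$ is chosen uniformly at random from $(\mathbb{F}_p^n)^d$, then the probability that $\Gamma_1(L_i(\mathbf{x}))=a_i$ and $\Gamma_2(L_i(\mathbf{x}))=b_i$ for every $i\le m$ is zero if $(a_1,\dots,a_m)\notin Z$, and if $(a_1,\dots,a_m)\in Z$ it differs from $p^{-d_1d'-d_2m}$ by at most $p^{d_1-d'd_1-r/2}$.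
   Context: A linear form in $d$ variables is $L(x_1,\dots,x_d)=\sum_{r=1}^d\gamma_rx_r$ with $\gamma_r\in\mathbb{F}_p$; for $\mathbf{x}\in(\mathbb{F}_p^n)^d$, $L(\mathbf{x})=\sum_r\gamma_rx_r\in\mathbb{F}_p^n$. A system $(L_1,\dots,L_m)$ with $L_i=\sum_r\gamma^{(i)}_rx_r$ is square-independent if the $d\times d$ matrices $(\gamma^{(i)}_r\gamma^{(i)}_s)_{r,s}$ are linearly independent over $\mathbb{F}_p$. A quadratic form on $\mathbb{F}_p^n$ is $q(x)=x^TMx$, $M$ symmetric over $\mathbb{F}_p$, with associated bilinear form $\beta(x,y)=(q(x+y)-q(x)-q(y))/2$. A quadratic map $\Gamma_2=(q_1,\dots,q_{d_2})$ has rank at least $r$ if $\sum_j\lambda_j\beta_j$ has rank at least $r$ for every nonzero $\lambda\in\mathbb{F}_p^{d_2}$, where $\beta_j$ is the bilinear form of $q_j$. *)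

theory Defs
  imports "HOL-Analysis.Analysis"
begin

text \<open>Field F_p is modelled by a finite field type 'k of prime cardinality p = CARD('k).
  F_p^n is 'k^'n (n = CARD('n)).\<close>

definition lin_form_apply :: "'k::field ^ 'd \<Rightarrow> ('k ^ 'n) ^ 'd \<Rightarrow> 'k ^ 'n" where
  "lin_form_apply g x = (\<Sum>r\<in>UNIV. g $ r *s x $ r)"

definition square_independent :: "('m::finite \<Rightarrow> 'k::field ^ 'd) \<Rightarrow> bool" where
  "square_independent g \<longleftrightarrow>
     (\<forall>\<mu>::'m \<Rightarrow> 'k. (\<forall>r s. (\<Sum>i\<in>UNIV. \<mu> i * (g i $ r * g i $ s)) = 0) \<longrightarrow> (\<forall>i. \<mu> i = 0))"

definition is_quadratic_form :: "('k::field ^ 'n \<Rightarrow> 'k) \<Rightarrow> bool" where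
  "is_quadratic_form q \<longleftrightarrow>
     (\<exists>M::'k^'n^'n. transpose M = M \<and> (\<forall>x. q x = (\<Sum>i\<in>UNIV. \<Sum>k\<in>UNIV. x $ i * M $ i $ k * x $ k)))"

definition assoc_bilinear :: "('k::field ^ 'n \<Rightarrow> 'k) \<Rightarrow> 'k ^ 'n \<Rightarrow> 'k ^ 'n \<Rightarrow> 'k" where
  "assoc_bilinear q x y = (q (x + y) - q x - q y) / 2"

text \<open>Rank of a bilinear form: dimension of the image of x \<mapsto> beta(x, \<cdot>) in the dual,
  the functional beta(x,\<cdot>) being represented by its coordinate vector.\<close>
definition bilinear_rank :: "('k::field ^ 'n \<Rightarrow> 'k ^ 'n \<Rightarrow> 'k) \<Rightarrow> nat" where
  "bilinear_rank \<beta> = vec.dim (range (\<lambda>x. \<chi> k. \<beta> x (axis k 1)))"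

definition is_quadratic_map :: "('k::field ^ 'n \<Rightarrow> 'k ^ 'd2) \<Rightarrow> bool" where
  "is_quadratic_map G \<longleftrightarrow> (\<forall>j. is_quadratic_form (\<lambda>x. G x $ j))"

definition quad_rank_at_least :: "('k::field ^ 'n \<Rightarrow> 'k ^ 'd2) \<Rightarrow> nat \<Rightarrow> bool" where
  "quad_rank_at_least G r \<longleftrightarrow>
     (\<forall>c::'k^'d2. c \<noteq> 0 \<longrightarrow>
        bilinear_rank (\<lambda>x y. \<Sum>j\<in>UNIV. c $ j * assoc_bilinear (\<lambda>z. G z $ j) x y) \<ge> r)"

end

theory Submission
  imports Defs "HOL-Number_Theory.Residues" "HOL-Library.Real_Mod" "HOL-Library.Function_Algebras"
begin

(*
  Write F(x) = (\<Gamma>1(L_i x))_i and Q(x) = (\<Gamma>2(L_i x))_i for x in (F_p^n)^d. F is linear with image Z,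
  and |Z| = p^(d1 d'), so for a in Z the fibre W = F^-1(a) is a coset of W0 = ker F of size p^(nd - d1 d').
  Detecting Q(x) = b with the additive character over all dual vectors C in (F_p^d2)^m, the term C = 0
  gives the main term |W| p^(-d2 m), and each C \<noteq> 0 contributes the exponential sum of the quadratic
  function <C, Q(x)> over W. Van der Corput's squaring bounds its square by |W| times the size of the
  radical of the bilinear part on W0. By square-independence some pair of indices (u, v) gives a
  non-zero combination c_j = \<Sum>_i C_ij \<gamma>_i(u) \<gamma>_i(v), whose form \<Sum>_j c_j \<beta>_j has rank at least r;
  testing the radical against the vectors k e_u and k e_v with k in ker \<Gamma>1 shows that it has index at
  least p^(r - 2 d1) in W0, so each of these exponential sums is at most |W0| p^(d1 - r/2).
*)

section \<open>Counting fibres\<close>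

context
  fixes A :: "'a::ab_group_add set" and g :: "'a \<Rightarrow> 'b"
  assumes finite_A: "finite A" and zero_in_A: "0 \<in> A"
    and diff_in_A: "\<And>x y. x \<in> A \<Longrightarrow> y \<in> A \<Longrightarrow> x - y \<in> A"
    and hom: "\<And>x y. x \<in> A \<Longrightarrow> y \<in> A \<Longrightarrow> g x = g y \<longleftrightarrow> g (x - y) = g 0"
begin

lemma card_fibre_eq_card_kernel:
  assumes "y \<in> g ` A"
  shows "card {x\<in>A. g x = y} = card {x\<in>A. g x = g 0}"
proof -
  obtain x0 where x0: "x0 \<in> A" "y = g x0" using assms by blast
  have add_in_A: "x + z \<in> A" if "x \<in> A" "z \<in> A" for x z
    using diff_in_A[OF that(1) diff_in_A[OF zero_in_A that(2)]] by simp
  have "bij_betw (\<lambda>h. h + x0) {x\<in>A. g x = g 0} {x\<in>A. g x = y}"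
    by (rule bij_betwI[where g="\<lambda>x. x - x0"]) (use add_in_A diff_in_A x0 hom in fastforce)+
  then show ?thesis by (simp add: bij_betw_same_card)
qed

lemma card_eq_card_image_mult_card_kernel:
  "card A = card (g ` A) * card {x\<in>A. g x = g 0}"
proof -
  have "card A = card (\<Union>y\<in>g ` A. {x\<in>A. g x = y})"
    by (rule arg_cong[where f=card]) auto
  also have "\<dots> = (\<Sum>y\<in>g ` A. card {x\<in>A. g x = y})"
    by (rule card_UN_disjoint) (use finite_A in auto)
  also have "\<dots> = card (g ` A) * card {x\<in>A. g x = g 0}"
    by (simp add: card_fibre_eq_card_kernel)
  finally show ?thesis .
qed

lemma card_preimage_le_card_mult_card_kernel:
  assumes "finite S"
  shows "card {x\<in>A. g x \<in> S} \<le> card S * card {x\<in>A. g x = g 0}"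
proof -
  have "card {x\<in>A. g x \<in> S} \<le> card (\<Union>y\<in>S \<inter> g ` A. {x\<in>A. g x = y})"
    by (rule card_mono) (use finite_A in auto)
  also have "\<dots> \<le> (\<Sum>y\<in>S \<inter> g ` A. card {x\<in>A. g x = y})"
    by (rule card_UN_le) (use assms in simp)
  also have "\<dots> = card (S \<inter> g ` A) * card {x\<in>A. g x = g 0}"
    by (simp add: card_fibre_eq_card_kernel)
  also have "\<dots> \<le> card S * card {x\<in>A. g x = g 0}"
    by (simp add: assms card_mono)
  finally show ?thesis .
qed

end

section \<open>Orthogonal complements\<close>

definition dotp :: "'k::comm_ring_1^'a \<Rightarrow> 'k^'a \<Rightarrow> 'k" where
  "dotp x y = (\<Sum>i\<in>UNIV. x$i * y$i)"

definition perp :: "('k::comm_ring_1^'a) set \<Rightarrow> ('k^'a) set" where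
  "perp S = {t. \<forall>s\<in>S. dotp t s = 0}"

lemma dotp_comm: "dotp x y = dotp y x"
  unfolding dotp_def by (simp add: mult.commute)

lemma dotp_add_left: "dotp (x + y) z = dotp x z + dotp y z"
  and dotp_add_right: "dotp x (y + z) = dotp x y + dotp x z"
  and dotp_diff_left: "dotp (x - y) z = dotp x z - dotp y z"
  and dotp_diff_right: "dotp x (y - z) = dotp x y - dotp x z"
  and dotp_scale_left: "dotp (c *s x) y = c * dotp x y"
  and dotp_scale_right: "dotp x (c *s y) = c * dotp x y"
  and dotp_sum_left: "dotp (\<Sum>i\<in>I. f i) x = (\<Sum>i\<in>I. dotp (f i) x)"
  and dotp_sum_right: "dotp x (\<Sum>i\<in>I. f i) = (\<Sum>i\<in>I. dotp x (f i))"
  and dotp_zero_left [simp]: "dotp 0 x = 0"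
  and dotp_zero_right [simp]: "dotp x 0 = 0"
  unfolding dotp_def
  by (simp_all add: algebra_simps sum.distrib sum_subtractf sum_distrib_left sum_distrib_right
      sum.swap[of _ I])

lemma dotp_axis: "dotp x (axis a 1) = x $ a"
  unfolding dotp_def axis_def by (simp add: if_distrib cong: if_cong)

lemma card_span_independent:
  fixes B :: "('k::{field,finite}^'n) set"
  assumes "vec.independent B"
  shows "card (vec.span B) = CARD('k) ^ card B"
proof -
  let ?comb = "\<lambda>u. \<Sum>v\<in>B. u v *s v"
  have "inj_on ?comb (B \<rightarrow>\<^sub>E UNIV)"
  proof (rule inj_onI)
    fix u w assume u: "u \<in> B \<rightarrow>\<^sub>E UNIV" and w: "w \<in> B \<rightarrow>\<^sub>E UNIV" and "?comb u = ?comb w"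
    then have "(\<Sum>v\<in>B. (u v - w v) *s v) = 0"
      by (simp only: vec.scale_left_diff_distrib sum_subtractf diff_self)
    moreover have "\<not> (\<exists>c. (\<exists>v\<in>B. c v \<noteq> 0) \<and> (\<Sum>v\<in>B. c v *s v) = 0)"
      using assms vec.dependent_finite[OF finite[of B]] by simp
    ultimately have "\<forall>v\<in>B. u v - w v = 0"
      by (auto dest: spec[where x="\<lambda>v. u v - w v"])
    then show "u = w" using u w by (auto simp: PiE_def extensional_def fun_eq_iff)
  qed
  moreover have "vec.span B = ?comb ` (B \<rightarrow>\<^sub>E UNIV)"
  proof -
    have "?comb u \<in> ?comb ` (B \<rightarrow>\<^sub>E UNIV)" for u
    proof
      show "?comb u = ?comb (restrict u B)" by (rule sum.cong) auto
    qed (intro restrict_PiE_iff[THEN iffD2] ballI UNIV_I)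
    then show ?thesis by (auto simp: vec.span_finite[OF finite])
  qed
  ultimately show ?thesis by (simp add: card_image card_PiE)
qed

lemma card_span:
  fixes S :: "('k::{field,finite}^'n) set"
  shows "card (vec.span S) = CARD('k) ^ vec.dim S"
proof -
  obtain B where B: "B \<subseteq> S" "vec.independent B" "S \<subseteq> vec.span B" "card B = vec.dim S"
    using vec.basis_exists by blast
  then have "vec.span B = vec.span S"
    by (simp add: vec.span_eq vec.span_superset subset_trans)
  with card_span_independent[OF B(2)] B(4) show ?thesis by simp
qed

lemma card_subspace:
  fixes S :: "('k::{field,finite}^'n) set"
  assumes "vec.subspace S"
  shows "card S = CARD('k) ^ vec.dim S"
proof -
  have "vec.span S = S" using assms by (rule vec.span_eq_iff[THEN iffD2])
  then show ?thesis using card_span[of S] by argo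
qed

lemma dotp_eq_0_span:
  assumes "t \<in> perp B" "s \<in> vec.span B"
  shows "dotp t s = 0"
  using assms(2)
proof (induction rule: vec.span_induct_alt)
  case (step c x y)
  then show ?case using assms(1) unfolding perp_def by (simp add: dotp_add_right dotp_scale_right)
qed simp

lemma card_perp_mult_card_span:
  fixes S :: "('k::{field,finite}^'a) set"
  shows "card (perp S) * card (vec.span S) = CARD('k) ^ CARD('a)"
proof -
  obtain B where B: "B \<subseteq> S" "vec.independent B" "S \<subseteq> vec.span B" "card B = vec.dim S"
    using vec.basis_exists by blast
  have perp_eq: "perp S = perp B"
  proof
    show "perp S \<subseteq> perp B" using B(1) unfolding perp_def by auto
    show "perp B \<subseteq> perp S" using B(3) dotp_eq_0_span unfolding perp_def by blast
  qed
  define \<phi> where "\<phi> t = restrict (dotp t) B" for t :: "'k^'a"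
  have hom: "\<phi> x = \<phi> y \<longleftrightarrow> \<phi> (x - y) = \<phi> 0" for x y
    unfolding \<phi>_def by (auto simp: restrict_def fun_eq_iff dotp_diff_left)
  have kernel: "{t \<in> UNIV. \<phi> t = \<phi> 0} = perp B"
    unfolding \<phi>_def perp_def by (auto simp: restrict_def fun_eq_iff)
  have "B \<rightarrow>\<^sub>E UNIV \<subseteq> range \<phi>"
  proof
    fix v :: "'k^'a \<Rightarrow> 'k" assume v: "v \<in> B \<rightarrow>\<^sub>E UNIV"
    \<comment> \<open>a functional taking the prescribed values on the basis, represented by its coefficient vector\<close>
    obtain f :: "'k^'a \<Rightarrow> 'k^1" where f: "Vector_Spaces.linear (*s) (*s) f" "\<forall>x\<in>B. f x = (\<chi> _. v x)"
      using vec.linear_independent_extend[OF B(2), where f="\<lambda>x. (\<chi> _. v x) :: 'k^1"] by blast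
    have "dotp (\<chi> i. f (axis i 1) $ 1) x = f x $ 1" for x
    proof -
      have "f x = (\<Sum>i\<in>UNIV. x$i *s f (axis i 1))"
        by (subst basis_expansion[symmetric, of x]) (simp add: vec.linear_sum[OF f(1)] vec.linear_scale[OF f(1)])
      then show ?thesis unfolding dotp_def by (simp add: sum_component mult.commute)
    qed
    then have "\<phi> (\<chi> i. f (axis i 1) $ 1) b = v b" for b
      using f(2) v unfolding \<phi>_def by (cases "b \<in> B") (simp_all add: PiE_def extensional_def)
    then have "\<phi> (\<chi> i. f (axis i 1) $ 1) = v" ..
    then show "v \<in> range \<phi>" by (metis rangeI)
  qed
  then have "range \<phi> = B \<rightarrow>\<^sub>E UNIV" unfolding \<phi>_def by auto
  moreover have "CARD('k^'a) = card (range \<phi>) * card {t \<in> UNIV. \<phi> t = \<phi> 0}"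
    by (rule card_eq_card_image_mult_card_kernel) (rule finite UNIV_I hom)+
  moreover have "card (B \<rightarrow>\<^sub>E (UNIV :: 'k set)) = CARD('k) ^ card B"
    by (simp add: card_PiE)
  ultimately have "CARD('k) ^ CARD('a) = CARD('k) ^ card B * card (perp S)"
    by (simp only: kernel perp_eq CARD_vec)
  with B(4) card_span[of S] show ?thesis by simp
qed

section \<open>Additive characters\<close>

locale faithful_character =
  fixes \<psi> :: "'a::ab_group_add \<Rightarrow> complex"
  assumes add: "\<psi> (a + b) = \<psi> a * \<psi> b"
    and norm_eq_1: "norm (\<psi> a) = 1"
    and eq_1_iff: "\<psi> a = 1 \<longleftrightarrow> a = 0"
begin

lemma zero: "\<psi> 0 = 1"
  using eq_1_iff by simp

lemma diff: "\<psi> (a - b) = \<psi> a * cnj (\<psi> b)"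
proof -
  have "\<psi> b * cnj (\<psi> b) = 1"
    using norm_eq_1[of b] by (metis complex_norm_square mult.commute of_real_1 power_one)
  then show ?thesis using add[of "a - b" b] by (metis diff_add_cancel mult.assoc mult.right_neutral)
qed

lemma sum_eq_0_if_shift:
  fixes W :: "'x::ab_group_add set" and f :: "'x \<Rightarrow> 'a"
  assumes "\<And>y. y \<in> W \<Longrightarrow> y + t \<in> W" and "\<And>y. y \<in> W \<Longrightarrow> y - t \<in> W"
    and shift: "\<And>y. y \<in> W \<Longrightarrow> f (y + t) = f y + c" and "c \<noteq> 0"
  shows "(\<Sum>y\<in>W. \<psi> (f y)) = 0"
proof -
  have "(\<Sum>y\<in>W. \<psi> (f y)) = (\<Sum>y\<in>W. \<psi> (f (y + t)))"
    by (rule sum.reindex_bij_witness[of _ "\<lambda>y. y + t" "\<lambda>y. y - t"]) (simp_all add: assms(1,2))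
  also have "\<dots> = \<psi> c * (\<Sum>y\<in>W. \<psi> (f y))"
    by (simp add: shift add sum_distrib_left mult.commute)
  finally have "(1 - \<psi> c) * (\<Sum>y\<in>W. \<psi> (f y)) = 0"
    by (simp add: algebra_simps)
  then show ?thesis using eq_1_iff \<open>c \<noteq> 0\<close> by simp
qed

lemma sum_nondegenerate_pairing:
  fixes P :: "'g::{ab_group_add,finite} \<Rightarrow> 'v::zero \<Rightarrow> 'a"
  assumes P_add: "\<And>C C' v. P (C + C') v = P C v + P C' v"
    and P_zero: "\<And>C. P C 0 = 0"
    and nondegenerate: "\<And>v. v \<noteq> 0 \<Longrightarrow> \<exists>C. P C v \<noteq> 0"
  shows "(\<Sum>C\<in>UNIV. \<psi> (P C v)) = (if v = 0 then of_nat CARD('g) else 0)"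
proof (cases "v = 0")
  case False
  then obtain C0 where "P C0 v \<noteq> 0" using nondegenerate by blast
  then show ?thesis
    using sum_eq_0_if_shift[of UNIV C0 "\<lambda>C. P C v" "P C0 v"] False by (simp add: P_add)
qed (simp add: P_zero zero)

lemma norm_sum_quadratic_squared_le:
  fixes W W0 :: "'x::{ab_group_add,finite} set" and f :: "'x \<Rightarrow> 'a" and D :: "'x \<Rightarrow> 'x \<Rightarrow> 'a"
  assumes coset: "\<And>y h. y \<in> W \<Longrightarrow> y + h \<in> W \<longleftrightarrow> h \<in> W0"
    and uminus: "\<And>w. w \<in> W0 \<Longrightarrow> - w \<in> W0"
    and f_add: "\<And>y h. f (y + h) = f y + f h + D y h"
    and D_add: "\<And>y w h. D (y + w) h = D y h + D w h"
  shows "(norm (\<Sum>x\<in>W. \<psi> (f x)))\<^sup>2 \<le> card W * card {h\<in>W0. \<forall>w\<in>W0. D w h = 0}"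
proof -
  define S where "S = (\<Sum>x\<in>W. \<psi> (f x))"
  define T where "T h = (\<Sum>y\<in>W. \<psi> (D y h))" for h
  define N where "N = {h\<in>W0. \<forall>w\<in>W0. D w h = 0}"
  have inner: "(\<Sum>x\<in>W. \<psi> (f x - f y)) = (\<Sum>h\<in>W0. \<psi> (f h) * \<psi> (D y h))" if "y \<in> W" for y
  proof -
    have "(\<Sum>x\<in>W. \<psi> (f x - f y)) = (\<Sum>h\<in>W0. \<psi> (f (y + h) - f y))"
    proof (rule sum.reindex_bij_witness[of _ "\<lambda>h. y + h" "\<lambda>x. x - y"])
      fix x assume "x \<in> W"
      then show "x - y \<in> W0" using coset[OF that, of "x - y"] by simp
    qed (use coset[OF that] in simp_all)
    then show ?thesis by (simp add: f_add add)
  qed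
  have "S * cnj S = (\<Sum>y\<in>W. \<Sum>x\<in>W. \<psi> (f x - f y))"
    unfolding S_def by (simp add: sum_distrib_left sum_distrib_right diff mult.commute)
  also have "\<dots> = (\<Sum>h\<in>W0. \<psi> (f h) * T h)"
    unfolding T_def by (simp add: inner sum_distrib_left sum.swap[of _ W])
  finally have S_sq: "S * cnj S = (\<Sum>h\<in>W0. \<psi> (f h) * T h)" .
  have T_eq_0: "T h = 0" if h: "h \<in> W0" "h \<notin> N" for h
  proof -
    obtain w where w: "w \<in> W0" "D w h \<noteq> 0" using h unfolding N_def by blast
    have "y - w \<in> W" if "y \<in> W" for y
      using coset[OF that, of "- w"] uminus[OF w(1)] by simp
    then show ?thesis
      unfolding T_def using coset w by (intro sum_eq_0_if_shift[where c="D w h"]) (simp_all add: D_add)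
  qed
  have norm_T: "norm (T h) \<le> card W" for h
    unfolding T_def using norm_sum[of "\<lambda>y. \<psi> (D y h)" W] by (simp add: norm_eq_1)
  have "(norm S)\<^sup>2 = norm (S * cnj S)" by (simp add: norm_mult power2_eq_square)
  also have "\<dots> \<le> (\<Sum>h\<in>W0. norm (T h))"
    unfolding S_sq using norm_sum[of "\<lambda>h. \<psi> (f h) * T h" W0] by (simp add: norm_mult norm_eq_1)
  also have "\<dots> = (\<Sum>h\<in>N. norm (T h))"
    using T_eq_0 unfolding N_def by (intro sum.mono_neutral_right) auto
  also have "\<dots> \<le> card N * card W"
    using sum_mono[of N "\<lambda>h. norm (T h)" "\<lambda>_. real (card W)"] norm_T by simp
  finally show ?thesis unfolding S_def N_def by (simp add: mult.commute)
qed

end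

lemma CHAR_eq_CARD:
  assumes "prime CARD('k::{field,finite})"
  shows "CHAR('k) = CARD('k)"
proof -
  have "CHAR('k) dvd CARD('k)" by (rule CHAR_dvd_CARD)
  moreover have "CHAR('k) \<noteq> 1" by simp
  ultimately show ?thesis using assms by (metis prime_nat_iff)
qed

lemma surj_of_int:
  assumes "prime CARD('k::{field,finite})"
  shows "surj (of_int :: int \<Rightarrow> 'k)"
proof -
  have "inj_on (of_int :: int \<Rightarrow> 'k) {0..<int CARD('k)}"
    by (rule inj_onI) (simp add: of_int_eq_iff_cong_CHAR CHAR_eq_CARD[OF assms] cong_def)
  then have "card ((of_int :: int \<Rightarrow> 'k) ` {0..<int CARD('k)}) = CARD('k)"
    by (simp add: card_image)
  then have "(of_int :: int \<Rightarrow> 'k) ` {0..<int CARD('k)} = UNIV"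
    by (intro card_subset_eq) auto
  then show ?thesis by auto
qed

text \<open>The character t \<mapsto> exp(2\<pi>i j/p) for any integer j with of_int j = t; it does not depend on
  the choice of j only because p is prime (so that of_int j = of_int j' iff p divides j - j').\<close>
definition add_char :: "'k::{field,finite} \<Rightarrow> complex" where
  "add_char t = cis (2 * pi * (SOME j. of_int j = t) / CARD('k))"

lemma add_char_of_int:
  assumes "prime CARD('k::{field,finite})"
  shows "add_char (of_int j :: 'k) = cis (2 * pi * j / CARD('k))"
proof -
  define j' where "j' = (SOME i. (of_int i :: 'k) = of_int j)"
  have "(of_int j' :: 'k) = of_int j" unfolding j'_def by (rule someI) (rule refl)
  then have "[j' = j] (mod int CARD('k))"
    by (simp add: of_int_eq_iff_cong_CHAR CHAR_eq_CARD[OF assms])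
  then obtain q where q: "j = j' + int CARD('k) * q"
    using cong_iff_lin by blast
  have "2 * pi * j / CARD('k) = 2 * pi * j' / CARD('k) + 2 * pi * of_int q"
    using q by (simp add: field_simps)
  then show ?thesis unfolding add_char_def j'_def by (simp flip: cis_mult)
qed

lemma faithful_character_add_char:
  assumes "prime CARD('k::{field,finite})"
  shows "faithful_character (add_char :: 'k \<Rightarrow> complex)"
proof
  let ?p = "CARD('k)"
  fix a b :: 'k
  obtain i j where ij: "a = of_int i" "b = of_int j" using surj_of_int[OF assms] by (metis surjD)
  show "add_char (a + b) = add_char a * add_char b"
    unfolding ij of_int_add[symmetric] add_char_of_int[OF assms]
    by (simp add: cis_mult add_divide_distrib distrib_left)
  show "norm (add_char a) = 1" unfolding add_char_def by simp
  have "add_char a = 1 \<longleftrightarrow> (\<exists>n. 2 * pi * i / ?p = of_int n * (2 * pi))"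
    unfolding ij add_char_of_int[OF assms] by (rule cis_eq_1_iff)
  also have "\<dots> \<longleftrightarrow> (\<exists>n. i = int ?p * n)"
  proof (intro ex_cong1)
    fix n :: int
    have "2 * pi * i / ?p = of_int n * (2 * pi) \<longleftrightarrow> real_of_int i = real ?p * of_int n"
      by (auto simp: field_simps)
    also have "\<dots> \<longleftrightarrow> real_of_int i = real_of_int (int ?p * n)"
      by simp
    also have "\<dots> \<longleftrightarrow> i = int ?p * n"
      by (rule of_int_eq_iff)
    finally show "2 * pi * i / ?p = of_int n * (2 * pi) \<longleftrightarrow> i = int ?p * n" .
  qed
  also have "\<dots> \<longleftrightarrow> a = 0"
    unfolding ij of_int_eq_0_iff_char_dvd CHAR_eq_CARD[OF assms] by (auto elim: dvdE)
  finally show "add_char a = 1 \<longleftrightarrow> a = 0" .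
qed

section \<open>Systems of linear forms\<close>

definition lin_comb :: "('m::finite \<Rightarrow> 'k::field^'d) \<Rightarrow> 'k^'m \<Rightarrow> 'k^'d" where
  "lin_comb \<gamma> \<mu> = (\<Sum>i\<in>UNIV. \<mu>$i *s \<gamma> i)"

definition relations :: "('m::finite \<Rightarrow> 'k::field^'d) \<Rightarrow> ('k^'m) set" where
  "relations \<gamma> = {\<mu>. lin_comb \<gamma> \<mu> = 0}"

definition forms_at :: "('m::finite \<Rightarrow> 'k::field^'d) \<Rightarrow> 'k^'d \<Rightarrow> 'k^'m" where
  "forms_at \<gamma> z = (\<chi> i. dotp (\<gamma> i) z)"

definition column :: "('m::finite \<Rightarrow> 'k::field^'d1) \<Rightarrow> 'd1 \<Rightarrow> 'k^'m" where
  "column c j = (\<chi> i. c i $ j)"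

lemma linear_vecI:
  fixes f :: "'k::field^'a \<Rightarrow> 'k^'b"
  assumes "\<And>x y. f (x + y) = f x + f y" and "\<And>c x. f (c *s x) = c *s f x"
  shows "Vector_Spaces.linear (*s) (*s) f"
  using assms unfolding Vector_Spaces.linear_iff by (simp add: vec.vector_space_axioms)

lemma subspace_range_linear:
  "Vector_Spaces.linear (*s) (*s) (f :: 'k::field^'a \<Rightarrow> 'k^'b) \<Longrightarrow> vec.subspace (range f)"
  using module_hom.subspace_image[OF Vector_Spaces.module_hom_linearI] vec.subspace_UNIV by blast

lemma linear_lin_comb: "Vector_Spaces.linear (*s) (*s) (lin_comb \<gamma>)"
  unfolding lin_comb_def
  by (rule linear_vecI)
    (simp_all add: vector_sadd_rdistrib sum.distrib vec.scale_sum_right vec.scale_scale)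

lemma range_lin_comb: "range (lin_comb \<gamma>) = vec.span (range \<gamma>)"
proof
  show "range (lin_comb \<gamma>) \<subseteq> vec.span (range \<gamma>)"
    unfolding lin_comb_def
    by (clarify, rule vec.span_sum, rule vec.span_scale, rule vec.span_base) simp
  have "lin_comb \<gamma> (axis i 1) = (\<Sum>j\<in>UNIV. if j = i then \<gamma> i else 0)" for i
    unfolding lin_comb_def by (rule sum.cong) (auto simp: axis_def)
  then have "lin_comb \<gamma> (axis i 1) = \<gamma> i" for i by simp
  then have "range \<gamma> \<subseteq> range (lin_comb \<gamma>)" by (metis image_subsetI rangeI)
  moreover have "vec.subspace (range (lin_comb \<gamma>))"
    by (rule subspace_range_linear[OF linear_lin_comb])
  ultimately show "vec.span (range \<gamma>) \<subseteq> range (lin_comb \<gamma>)" by (rule vec.span_minimal)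
qed

lemma linear_card_UNIV:
  fixes f :: "'k::{field,finite}^'a \<Rightarrow> 'k^'b"
  assumes "Vector_Spaces.linear (*s) (*s) f"
  shows "CARD('k^'a) = card (range f) * card {x. f x = 0}"
proof -
  have "CARD('k^'a) = card (range f) * card {x\<in>UNIV. f x = f 0}"
    by (rule card_eq_card_image_mult_card_kernel)
      (simp_all add: vec.linear_diff[OF assms] vec.linear_0[OF assms])
  then show ?thesis by (simp add: vec.linear_0[OF assms])
qed

lemma card_span_mult_card_relations:
  fixes \<gamma> :: "'m::finite \<Rightarrow> 'k::{field,finite}^'d"
  shows "card (vec.span (range \<gamma>)) * card (relations \<gamma>) = CARD('k) ^ CARD('m)"
  using linear_card_UNIV[OF linear_lin_comb, of \<gamma>]
  by (simp add: range_lin_comb relations_def)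

lemma card_range_forms_at:
  fixes \<gamma> :: "'m::finite \<Rightarrow> 'k::{field,finite}^'d"
  shows "card (range (forms_at \<gamma>)) = card (vec.span (range \<gamma>))"
proof -
  have "Vector_Spaces.linear (*s) (*s) (forms_at \<gamma>)"
    by (rule linear_vecI) (simp_all add: forms_at_def vec_eq_iff dotp_add_right dotp_scale_right)
  then have "card (perp (range \<gamma>)) * card (range (forms_at \<gamma>)) = CARD('k) ^ CARD('d)"
    using linear_card_UNIV[of "forms_at \<gamma>"]
    by (simp add: forms_at_def perp_def vec_eq_iff dotp_comm mult.commute)
  then have "card (perp (range \<gamma>)) * card (range (forms_at \<gamma>))
      = card (perp (range \<gamma>)) * card (vec.span (range \<gamma>))"
    by (simp only: card_perp_mult_card_span)
  moreover have "card (perp (range \<gamma>)) > 0"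
    by (rule card_gt_0_iff[THEN iffD2]) (auto simp: perp_def intro!: exI[of _ 0])
  ultimately show ?thesis by auto
qed

lemma range_forms_at: "range (forms_at \<gamma>) = perp (relations \<gamma>)"
  for \<gamma> :: "'m::finite \<Rightarrow> 'k::{field,finite}^'d"
proof (rule card_subset_eq)
  show "range (forms_at \<gamma>) \<subseteq> perp (relations \<gamma>)"
  proof (clarsimp simp: perp_def relations_def)
    fix z \<mu> assume "lin_comb \<gamma> \<mu> = 0"
    moreover have "dotp (lin_comb \<gamma> \<mu>) z = (\<Sum>i\<in>UNIV. \<mu>$i * dotp (\<gamma> i) z)"
      unfolding lin_comb_def by (simp add: dotp_sum_left dotp_scale_left)
    moreover have "dotp (forms_at \<gamma> z) \<mu> = (\<Sum>i\<in>UNIV. \<mu>$i * dotp (\<gamma> i) z)"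
      by (simp add: forms_at_def dotp_def mult.commute)
    ultimately show "dotp (forms_at \<gamma> z) \<mu> = 0" by simp
  qed
  have "vec.subspace (relations \<gamma>)"
    unfolding relations_def
    using module_hom.subspace_kernel[OF Vector_Spaces.module_hom_linearI[OF linear_lin_comb]] .
  then have "vec.span (relations \<gamma>) = relations \<gamma>" by (rule vec.span_eq_iff[THEN iffD2])
  then have "card (perp (relations \<gamma>)) * card (relations \<gamma>) = CARD('k) ^ CARD('m)"
    using card_perp_mult_card_span[of "relations \<gamma>"] by argo
  then have "card (perp (relations \<gamma>)) * card (relations \<gamma>)
      = card (vec.span (range \<gamma>)) * card (relations \<gamma>)"
    by (simp only: card_span_mult_card_relations)
  moreover have "card (relations \<gamma>) > 0"
    by (rule card_gt_0_iff[THEN iffD2]) (auto simp: relations_def lin_comb_def intro!: exI[of _ 0])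
  ultimately have "card (perp (relations \<gamma>)) = card (vec.span (range \<gamma>))" by auto
  then show "card (range (forms_at \<gamma>)) = card (perp (relations \<gamma>))"
    using card_range_forms_at[of \<gamma>] by simp
qed simp

lemma relations_respected_iff:
  fixes \<gamma> :: "'m::finite \<Rightarrow> 'k::field^'d" and a :: "'m \<Rightarrow> 'k^'d1"
  shows "(\<forall>\<mu>. (\<Sum>i\<in>UNIV. \<mu> i *s \<gamma> i) = 0 \<longrightarrow> (\<Sum>i\<in>UNIV. \<mu> i *s a i) = 0)
     \<longleftrightarrow> (\<forall>j. column a j \<in> perp (relations \<gamma>))"
proof -
  have column_dotp: "dotp (column a j) \<mu> = (\<Sum>i\<in>UNIV. \<mu>$i *s a i) $ j" for j \<mu>
    unfolding dotp_def column_def by (simp add: sum_component mult.commute)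
  show ?thesis
  proof (intro iffI allI impI)
    fix j assume H: "\<forall>\<mu>. (\<Sum>i\<in>UNIV. \<mu> i *s \<gamma> i) = 0 \<longrightarrow> (\<Sum>i\<in>UNIV. \<mu> i *s a i) = 0"
    show "column a j \<in> perp (relations \<gamma>)"
      unfolding perp_def relations_def lin_comb_def using H[rule_format, of "\<lambda>i. _ $ i"]
      by (simp add: column_dotp)
  next
    fix \<mu> :: "'m \<Rightarrow> 'k"
    assume H: "\<forall>j. column a j \<in> perp (relations \<gamma>)" and rel: "(\<Sum>i\<in>UNIV. \<mu> i *s \<gamma> i) = 0"
    have "(\<chi> i. \<mu> i) \<in> relations \<gamma>" using rel unfolding relations_def lin_comb_def by simp
    then have "dotp (column a j) (\<chi> i. \<mu> i) = 0" for j using H unfolding perp_def by blast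
    then show "(\<Sum>i\<in>UNIV. \<mu> i *s a i) = 0" by (simp add: column_dotp vec_eq_iff)
  qed
qed

lemma card_columns_in:
  fixes S :: "('k::field^'m::finite) set"
  shows "card {c :: 'm \<Rightarrow> 'k^'d1. \<forall>j. column c j \<in> S} = card S ^ CARD('d1)"
proof -
  have "bij_betw (\<lambda>c j. column c j) {c :: 'm \<Rightarrow> 'k^'d1. \<forall>j. column c j \<in> S} (UNIV \<rightarrow>\<^sub>E S)"
  proof (rule bij_betwI[where g="\<lambda>w i. \<chi> j. w j $ i"])
    show "(\<lambda>w i. \<chi> j. w j $ i) \<in> (UNIV \<rightarrow>\<^sub>E S) \<rightarrow> {c. \<forall>j. column c j \<in> S}"
      by (auto simp: column_def)
  qed (auto simp: column_def vec_eq_iff)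
  then show ?thesis by (simp add: bij_betw_same_card card_PiE)
qed

lemma lin_form_apply_add: "lin_form_apply g (x + y) = lin_form_apply g x + lin_form_apply g y"
  unfolding lin_form_apply_def by (simp add: vector_add_ldistrib sum.distrib)

lemma lin_form_apply_diff: "lin_form_apply g (x - y) = lin_form_apply g x - lin_form_apply g y"
  unfolding lin_form_apply_def by (simp add: vector_ssub_ldistrib sum_subtractf)

lemma lin_form_apply_zero: "lin_form_apply g 0 = 0"
  unfolding lin_form_apply_def by simp

lemma lin_form_apply_uminus: "lin_form_apply g (- x) = - lin_form_apply g x"
  using lin_form_apply_diff[of g 0 x] by (simp add: lin_form_apply_zero)

lemma lin_form_apply_axis: "lin_form_apply g (axis r k) = g $ r *s k"
  unfolding lin_form_apply_def axis_def by (simp add: if_distrib cong: if_cong)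

locale linear_system =
  fixes \<gamma> :: "'m::finite \<Rightarrow> 'k::{field,finite}^'d" and \<Gamma>1 :: "'k^'n \<Rightarrow> 'k^'d1"
  assumes linear: "Vector_Spaces.linear (*s) (*s) \<Gamma>1" and surj: "surj \<Gamma>1"
begin

definition lin_map :: "('k^'n)^'d \<Rightarrow> 'm \<Rightarrow> 'k^'d1" where
  "lin_map x = (\<lambda>i. \<Gamma>1 (lin_form_apply (\<gamma> i) x))"

definition fibre :: "('m \<Rightarrow> 'k^'d1) \<Rightarrow> (('k^'n)^'d) set" where
  "fibre a = {x. lin_map x = a}"

lemma lin_map_add: "lin_map (x + y) = lin_map x + lin_map y"
  and lin_map_diff: "lin_map (x - y) = lin_map x - lin_map y"
  and lin_map_zero: "lin_map 0 = 0"
  and lin_map_uminus: "lin_map (- x) = - lin_map x"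
  unfolding lin_map_def
  by (simp_all add: fun_eq_iff lin_form_apply_add lin_form_apply_diff lin_form_apply_zero
      lin_form_apply_uminus vec.linear_add[OF linear] vec.linear_diff[OF linear]
      vec.linear_0[OF linear] vec.linear_neg[OF linear])

lemma lin_map_eq_iff: "lin_map x = lin_map y \<longleftrightarrow> lin_map (x - y) = lin_map 0"
  by (simp add: lin_map_diff lin_map_zero)

lemma column_lin_map: "column (lin_map x) j = forms_at \<gamma> (\<chi> r. \<Gamma>1 (x$r) $ j)"
  unfolding column_def forms_at_def lin_map_def dotp_def lin_form_apply_def
  by (simp add: vec.linear_sum[OF linear] vec.linear_scale[OF linear] sum_component vec_eq_iff)

lemma range_lin_map_columns: "range lin_map = {c. \<forall>j. column c j \<in> perp (relations \<gamma>)}"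
proof
  show "range lin_map \<subseteq> {c. \<forall>j. column c j \<in> perp (relations \<gamma>)}"
    by (auto simp: column_lin_map simp flip: range_forms_at)
  show "{c. \<forall>j. column c j \<in> perp (relations \<gamma>)} \<subseteq> range lin_map"
  proof
    fix c :: "'m \<Rightarrow> 'k^'d1" assume "c \<in> {c. \<forall>j. column c j \<in> perp (relations \<gamma>)}"
    then have "\<forall>j. \<exists>z. forms_at \<gamma> z = column c j"
      by (simp add: range_forms_at[symmetric] image_iff eq_commute)
    then obtain z :: "'d1 \<Rightarrow> 'k^'d" where z: "\<And>j. forms_at \<gamma> (z j) = column c j"
      by metis
    define x where "x = (\<chi> r. inv_into UNIV \<Gamma>1 (\<chi> j. z j $ r))"
    have "(\<chi> r. \<Gamma>1 (x$r) $ j) = z j" for j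
      unfolding x_def by (simp add: surj_f_inv_f[OF surj] vec_eq_iff)
    then have columns: "column (lin_map x) j = column c j" for j
      by (simp add: column_lin_map z)
    have "lin_map x i $ j = c i $ j" for i j
      using arg_cong[where f="\<lambda>v. v $ i", OF columns[of j]] by (simp add: column_def)
    then have "lin_map x = c" by (simp add: fun_eq_iff vec_eq_iff)
    then show "c \<in> range lin_map" by (metis rangeI)
  qed
qed

lemma range_lin_map: "range lin_map =
  {c. \<forall>\<mu>. (\<Sum>i\<in>UNIV. \<mu> i *s \<gamma> i) = 0 \<longrightarrow> (\<Sum>i\<in>UNIV. \<mu> i *s c i) = 0}"
  unfolding range_lin_map_columns by (simp only: relations_respected_iff)

lemma card_range_lin_map: "card (range lin_map) = CARD('k) ^ (vec.dim (range \<gamma>) * CARD('d1))"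
proof -
  have "card (perp (relations \<gamma>)) = card (vec.span (range \<gamma>))"
    using range_forms_at[of \<gamma>] card_range_forms_at[of \<gamma>] by simp
  then show ?thesis
    unfolding range_lin_map_columns card_columns_in by (simp add: card_span power_mult)
qed

lemma card_UNIV_eq_card_range_mult_card_fibre_0:
  "CARD(('k^'n)^'d) = card (range lin_map) * card (fibre 0)"
proof -
  have "CARD(('k^'n)^'d) = card (range lin_map) * card {x\<in>UNIV. lin_map x = lin_map 0}"
    by (rule card_eq_card_image_mult_card_kernel) (rule finite UNIV_I lin_map_eq_iff)+
  then show ?thesis by (simp add: fibre_def lin_map_zero)
qed

lemma card_fibre:
  assumes "a \<in> range lin_map"
  shows "card (fibre a) = card (fibre 0)"
proof -
  have "card {x\<in>UNIV. lin_map x = a} = card {x\<in>UNIV. lin_map x = lin_map 0}"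
    by (rule card_fibre_eq_card_kernel) (rule finite UNIV_I lin_map_eq_iff assms)+
  then show ?thesis by (simp add: fibre_def lin_map_zero)
qed

lemma card_perp_kernel: "card (perp {v. \<Gamma>1 v = 0}) = CARD('k) ^ CARD('d1)"
proof -
  let ?K = "{v. \<Gamma>1 v = 0}"
  have "vec.subspace ?K"
    using module_hom.subspace_kernel[OF Vector_Spaces.module_hom_linearI[OF linear]] .
  then have "vec.span ?K = ?K" by (rule vec.span_eq_iff[THEN iffD2])
  then have "card (perp ?K) * card ?K = CARD('k) ^ CARD('n)"
    using card_perp_mult_card_span[of ?K] by argo
  also have "\<dots> = CARD('k) ^ CARD('d1) * card ?K"
    using linear_card_UNIV[OF linear] surj by simp
  finally have "card (perp ?K) * card ?K = CARD('k) ^ CARD('d1) * card ?K" .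
  moreover have "card ?K > 0"
    by (rule card_gt_0_iff[THEN iffD2]) (auto intro!: exI[of _ 0] simp: vec.linear_0[OF linear])
  ultimately show ?thesis using mult_right_cancel[of "card ?K"] by (metis not_less0)
qed

lemma card_range_le_card_image_kernel:
  assumes T_add: "\<And>u v. T (u + v) = T u + T v"
  shows "card (range T) \<le> CARD('k) ^ CARD('d1) * card (T ` {v. \<Gamma>1 v = 0})"
proof -
  let ?K = "{v. \<Gamma>1 v = 0}" and ?s = "inv_into UNIV \<Gamma>1"
  \<comment> \<open>every v splits as a lift of \<open>\<Gamma>1 v\<close> plus an element of the kernel\<close>
  have "range T \<subseteq> (\<Union>y. (\<lambda>t. T (?s y) + t) ` (T ` ?K))"
  proof clarify
    fix v
    have "v - ?s (\<Gamma>1 v) \<in> ?K"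
      by (simp add: vec.linear_diff[OF linear] surj_f_inv_f[OF surj])
    moreover have "T v = T (?s (\<Gamma>1 v)) + T (v - ?s (\<Gamma>1 v))"
      by (simp flip: T_add)
    ultimately show "T v \<in> (\<Union>y. (\<lambda>t. T (?s y) + t) ` (T ` ?K))" by blast
  qed
  then have "card (range T) \<le> card (\<Union>y. (\<lambda>t. T (?s y) + t) ` (T ` ?K))"
    by (rule card_mono[rotated]) simp
  also have "\<dots> \<le> (\<Sum>y\<in>UNIV. card ((\<lambda>t. T (?s y) + t) ` (T ` ?K)))"
    by (rule card_UN_le) simp
  also have "\<dots> \<le> (\<Sum>y\<in>(UNIV :: ('k^'d1) set). card (T ` ?K))"
    by (rule sum_mono) (rule card_image_le, simp)
  finally show ?thesis by simp
qed

lemma zero_mem_fibre_0: "0 \<in> fibre 0"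
  by (simp add: fibre_def lin_map_zero)

lemma diff_mem_fibre_0: "x \<in> fibre 0 \<Longrightarrow> y \<in> fibre 0 \<Longrightarrow> x - y \<in> fibre 0"
  by (simp add: fibre_def lin_map_diff)

lemma axis_mem_fibre_0: "\<Gamma>1 k = 0 \<Longrightarrow> axis r k \<in> fibre 0"
  by (simp add: fibre_def fun_eq_iff lin_map_def lin_form_apply_axis vec.linear_scale[OF linear])

end

section \<open>Quadratic maps\<close>

definition bform :: "'k::comm_ring_1^'n^'n \<Rightarrow> 'k^'n \<Rightarrow> 'k^'n \<Rightarrow> 'k" where
  "bform A u v = dotp u (A *v v)"

lemma bform_add_left: "bform A (u + u') v = bform A u v + bform A u' v"
  unfolding bform_def by (rule dotp_add_left)

lemma bform_add_right: "bform A u (v + v') = bform A u v + bform A u v'"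
  unfolding bform_def by (simp add: matrix_vector_right_distrib dotp_add_right)

lemma bform_sym:
  assumes "transpose A = A"
  shows "bform A u v = bform A v u"
proof -
  have A_sym: "A$a$b = A$b$a" for a b
    using assms unfolding transpose_def vec_eq_iff by (metis vec_lambda_beta)
  have "bform A u v = (\<Sum>a\<in>UNIV. \<Sum>b\<in>UNIV. u$a * (A$a$b * v$b))"
    unfolding bform_def dotp_def matrix_vector_mult_def by (simp add: sum_distrib_left)
  also have "\<dots> = (\<Sum>b\<in>UNIV. \<Sum>a\<in>UNIV. v$b * (A$b$a * u$a))"
    by (subst sum.swap) (simp add: A_sym mult_ac)
  also have "\<dots> = bform A v u"
    unfolding bform_def dotp_def matrix_vector_mult_def by (simp add: sum_distrib_left)
  finally show ?thesis .
qed

lemma bform_axis_right: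
  assumes "transpose A = A"
  shows "bform A v (axis a 1) = (A *v v) $ a"
proof -
  have "bform A v (axis a 1) = bform A (axis a 1) v" by (rule bform_sym[OF assms])
  then show ?thesis by (simp add: bform_def dotp_comm[of "axis a 1"] dotp_axis)
qed

lemma quadratic_eq_bform: "(\<Sum>i\<in>UNIV. \<Sum>k\<in>UNIV. x$i * A$i$k * x$k) = bform A x x"
  unfolding bform_def dotp_def matrix_vector_mult_def by (simp add: sum_distrib_left mult.assoc)

definition pairing :: "('k::comm_ring_1^'d2)^'m \<Rightarrow> ('k^'d2)^'m \<Rightarrow> 'k" where
  "pairing C v = (\<Sum>i\<in>UNIV. dotp (C$i) (v$i))"

lemma pairing_add_left: "pairing (C + C') v = pairing C v + pairing C' v"
  and pairing_diff_right: "pairing C (v - w) = pairing C v - pairing C w"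
  and pairing_zero_left [simp]: "pairing 0 v = 0"
  and pairing_zero_right [simp]: "pairing C 0 = 0"
  unfolding pairing_def by (simp_all add: dotp_add_left dotp_diff_right sum.distrib sum_subtractf)

lemma pairing_nondegenerate:
  fixes v :: "('k::field^'d2)^'m"
  assumes "v \<noteq> 0"
  shows "\<exists>C. pairing C v \<noteq> 0"
proof -
  obtain i where "v$i \<noteq> 0" using assms by (metis vec_eq_iff zero_index)
  then obtain a where a: "v$i$a \<noteq> 0" by (metis vec_eq_iff zero_index)
  have "pairing (\<chi> i'. if i' = i then axis a 1 else 0) v = (\<Sum>i'\<in>UNIV. if i' = i then v$i$a else 0)"
    unfolding pairing_def by (rule sum.cong) (auto simp: dotp_comm[of "axis a 1"] dotp_axis)
  also have "\<dots> = v$i$a" by simp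
  finally have "pairing (\<chi> i'. if i' = i then axis a 1 else 0) v \<noteq> 0" using a by simp
  then show ?thesis ..
qed

lemma square_independent_nonzero_coefficients:
  fixes \<gamma> :: "'m::finite \<Rightarrow> 'k::field^'d" and C :: "('k^'d2)^'m"
  assumes "square_independent \<gamma>" and "C \<noteq> 0"
  obtains r s where "(\<chi> j. \<Sum>i\<in>UNIV. C$i$j * (\<gamma> i $ r * \<gamma> i $ s)) \<noteq> 0"
proof -
  obtain i0 where "C$i0 \<noteq> 0" using assms(2) by (metis vec_eq_iff zero_index)
  then obtain j0 where "C$i0$j0 \<noteq> 0" by (metis vec_eq_iff zero_index)
  then have "\<exists>r s. (\<Sum>i\<in>UNIV. C$i$j0 * (\<gamma> i $ r * \<gamma> i $ s)) \<noteq> 0"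
    using assms(1)[unfolded square_independent_def, rule_format, of "\<lambda>i. C$i$j0"] by blast
  then obtain r s where "(\<chi> j. \<Sum>i\<in>UNIV. C$i$j * (\<gamma> i $ r * \<gamma> i $ s)) $ j0 \<noteq> 0"
    by auto
  then have "(\<chi> j. \<Sum>i\<in>UNIV. C$i$j * (\<gamma> i $ r * \<gamma> i $ s)) \<noteq> 0"
    by (metis zero_index)
  then show ?thesis by (rule that)
qed

section \<open>The estimate\<close>

lemma le_mult_powr_of_square_le:
  fixes S w N p :: real and d r :: nat
  assumes S_sq: "S\<^sup>2 \<le> w * N" and N_le: "N * p ^ r \<le> w * p ^ (2 * d)"
    and "p > 0" "w \<ge> 0"
  shows "S \<le> w * p powr (real d - real r / 2)"
proof (rule power2_le_imp_le)
  have "(p powr (real d - real r / 2))\<^sup>2 = p powr (2 * (real d - real r / 2))"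
    using \<open>p > 0\<close> powr_power[of p "real d - real r / 2" 2] by simp
  also have "2 * (real d - real r / 2) = real (2 * d) - real r" by simp
  also have "p powr (real (2 * d) - real r) = p ^ (2 * d) / p ^ r"
    by (simp only: powr_diff powr_realpow[OF \<open>p > 0\<close>])
  finally have "(w * p powr (real d - real r / 2))\<^sup>2 = w\<^sup>2 * (p ^ (2 * d) / p ^ r)"
    by (simp add: power_mult_distrib)
  also have "\<dots> = w * (w * p ^ (2 * d) / p ^ r)"
    by (simp add: power2_eq_square)
  moreover have "N \<le> w * p ^ (2 * d) / p ^ r"
    using N_le \<open>p > 0\<close> by (simp add: pos_le_divide_eq)
  then have "w * N \<le> w * (w * p ^ (2 * d) / p ^ r)"
    using \<open>w \<ge> 0\<close> by (rule mult_left_mono)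
  ultimately show "S\<^sup>2 \<le> (w * p powr (real d - real r / 2))\<^sup>2"
    using S_sq by linarith
  show "0 \<le> w * p powr (real d - real r / 2)" using \<open>w \<ge> 0\<close> by simp
qed

lemma normalized_error_le:
  fixes p w X c :: real and e f :: nat
  assumes "p > 0" "w > 0" "X \<ge> 0" and err: "\<bar>p ^ f * c - w\<bar> \<le> (p ^ f - 1) * (w * X)"
  shows "\<bar>c / (p ^ e * w) - p powr - real (e + f)\<bar> \<le> X / p ^ e"
proof -
  have pos: "p ^ e * w * p ^ f > 0" using assms by simp
  have "p powr - real (e + f) = inverse (p ^ (e + f))"
    by (simp only: powr_minus powr_realpow[OF \<open>p > 0\<close>])
  also have "\<dots> = w / (p ^ e * w * p ^ f)"
    using assms by (simp add: power_add field_simps)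
  finally have "c / (p ^ e * w) - p powr - real (e + f) = (p ^ f * c - w) / (p ^ e * w * p ^ f)"
    using assms by (simp add: field_simps)
  then have "\<bar>c / (p ^ e * w) - p powr - real (e + f)\<bar> = \<bar>p ^ f * c - w\<bar> / (p ^ e * w * p ^ f)"
    using pos by (simp add: abs_divide)
  also have "\<dots> \<le> (p ^ f - 1) * (w * X) / (p ^ e * w * p ^ f)"
    by (rule divide_right_mono[OF err]) (use pos in simp)
  also have "\<dots> \<le> p ^ f * (w * X) / (p ^ e * w * p ^ f)"
    using pos assms by (intro divide_right_mono mult_right_mono) simp_all
  also have "\<dots> = X / p ^ e"
    using assms by (simp add: field_simps)
  finally show ?thesis .
qed

locale quadratic_system = linear_system \<gamma> \<Gamma>1
  for \<gamma> :: "'m::finite \<Rightarrow> 'k::{field,finite}^'d" and \<Gamma>1 :: "'k^'n \<Rightarrow> 'k^'d1" +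
  fixes \<Gamma>2 :: "'k^'n \<Rightarrow> 'k^'d2" and M :: "'d2 \<Rightarrow> 'k^'n^'n"
  assumes symmetric: "\<And>j. transpose (M j) = M j"
    and \<Gamma>2_eq: "\<And>j x. \<Gamma>2 x $ j = (\<Sum>i\<in>UNIV. \<Sum>k\<in>UNIV. x$i * M j$i$k * x$k)"
    and prime_card: "prime CARD('k)" and odd_card: "odd CARD('k)"
begin

interpretation \<psi>: faithful_character "add_char :: 'k \<Rightarrow> complex"
  by (rule faithful_character_add_char[OF prime_card])

lemma two_neq_zero: "(2::'k) \<noteq> 0"
proof
  assume "(2::'k) = 0"
  then have "(of_nat 2 :: 'k) = 0" by simp
  then have "CARD('k) dvd 2"
    by (simp only: of_nat_eq_0_iff_char_dvd CHAR_eq_CARD[OF prime_card])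
  then have "CARD('k) \<le> 2" by (rule dvd_imp_le) simp
  then show False
    using odd_card prime_ge_2_nat[OF prime_card] by (simp add: le_antisym)
qed

lemma \<Gamma>2_bform: "\<Gamma>2 x $ j = bform (M j) x x"
  by (simp only: \<Gamma>2_eq quadratic_eq_bform)

lemma \<Gamma>2_add: "\<Gamma>2 (u + v) $ j = \<Gamma>2 u $ j + \<Gamma>2 v $ j + 2 * bform (M j) u v"
  by (simp add: \<Gamma>2_bform bform_add_left bform_add_right bform_sym[OF symmetric, of j v u]
      algebra_simps)

lemma assoc_bilinear_eq_bform: "assoc_bilinear (\<lambda>z. \<Gamma>2 z $ j) u v = bform (M j) u v"
  unfolding assoc_bilinear_def using two_neq_zero by (simp add: \<Gamma>2_add)

definition quad_map :: "('k^'n)^'d \<Rightarrow> ('k^'d2)^'m" where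
  "quad_map x = (\<chi> i. \<Gamma>2 (lin_form_apply (\<gamma> i) x))"

definition polar :: "('k^'d2)^'m \<Rightarrow> ('k^'n)^'d \<Rightarrow> ('k^'n)^'d \<Rightarrow> 'k" where
  "polar C x h = (\<Sum>i\<in>UNIV. \<Sum>j\<in>UNIV.
     C$i$j * (2 * bform (M j) (lin_form_apply (\<gamma> i) x) (lin_form_apply (\<gamma> i) h)))"

lemma pairing_quad_map_add:
  "pairing C (quad_map (x + h)) = pairing C (quad_map x) + pairing C (quad_map h) + polar C x h"
  unfolding pairing_def quad_map_def polar_def dotp_def
  by (simp add: lin_form_apply_add \<Gamma>2_add distrib_left sum.distrib)

lemma polar_add_left: "polar C (y + w) h = polar C y h + polar C w h"
  unfolding polar_def by (simp add: lin_form_apply_add bform_add_left distrib_left sum.distrib)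

definition form_comb :: "'k^'d2 \<Rightarrow> 'k^'n \<Rightarrow> 'k^'n" where
  "form_comb c v = (\<Sum>j\<in>UNIV. c$j *s (M j *v v))"

lemma linear_form_comb: "Vector_Spaces.linear (*s) (*s) (form_comb c)"
  unfolding form_comb_def
  by (rule linear_vecI) (simp_all add: matrix_vector_right_distrib vector_add_ldistrib sum.distrib
      vec.linear_scale[OF matrix_vector_mul_linear_gen] vec.scale_sum_right mult.commute)

lemma dim_range_form_comb_ge:
  assumes "quad_rank_at_least \<Gamma>2 r" and "c \<noteq> 0"
  shows "r \<le> vec.dim (range (form_comb c))"
proof -
  have "(\<lambda>v. \<chi> a. \<Sum>j\<in>UNIV. c$j * assoc_bilinear (\<lambda>z. \<Gamma>2 z $ j) v (axis a 1)) = form_comb c"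
    by (simp add: fun_eq_iff vec_eq_iff form_comb_def assoc_bilinear_eq_bform
        bform_axis_right[OF symmetric] sum_component)
  moreover have "r \<le> bilinear_rank (\<lambda>x y. \<Sum>j\<in>UNIV. c $ j * assoc_bilinear (\<lambda>z. \<Gamma>2 z $ j) x y)"
    using assms unfolding quad_rank_at_least_def by blast
  ultimately show ?thesis unfolding bilinear_rank_def by argo
qed

definition polar_vec :: "('k^'d2)^'m \<Rightarrow> 'd \<Rightarrow> ('k^'n)^'d \<Rightarrow> 'k^'n" where
  "polar_vec C r h =
     (\<Sum>i\<in>UNIV. \<Sum>j\<in>UNIV. (2 * C$i$j * \<gamma> i $ r) *s (M j *v lin_form_apply (\<gamma> i) h))"

lemma polar_axis_left: "polar C (axis r k) h = dotp k (polar_vec C r h)"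
  unfolding polar_def polar_vec_def
  by (simp add: lin_form_apply_axis dotp_sum_right dotp_scale_right dotp_scale_left bform_def ac_simps)

lemma polar_vec_diff: "polar_vec C r (h - h') = polar_vec C r h - polar_vec C r h'"
  unfolding polar_vec_def
  by (simp add: lin_form_apply_diff matrix_vector_mult_diff_distrib vector_ssub_ldistrib sum_subtractf)

lemma polar_vec_zero: "polar_vec C r 0 = 0"
  using polar_vec_diff[of C r 0 0] by simp

lemma polar_vec_axis:
  "polar_vec C r (axis s k) = 2 *s form_comb (\<chi> j. \<Sum>i\<in>UNIV. C$i$j * (\<gamma> i $ r * \<gamma> i $ s)) k"
proof -
  have "polar_vec C r (axis s k) = (\<Sum>j\<in>UNIV. \<Sum>i\<in>UNIV. (2 * C$i$j * \<gamma> i $ r * \<gamma> i $ s) *s (M j *v k))"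
    unfolding polar_vec_def lin_form_apply_axis
    by (subst sum.swap) (simp add: vec.linear_scale[OF matrix_vector_mul_linear_gen] vec.scale_scale mult.assoc)
  then show ?thesis
    unfolding form_comb_def
    by (simp add: vec.scale_sum_right vec.scale_sum_left vec.scale_scale mult_ac)
qed

definition radical :: "('k^'d2)^'m \<Rightarrow> (('k^'n)^'d) set" where
  "radical C = {h \<in> fibre 0. \<forall>w\<in>fibre 0. polar C w h = 0}"

lemma polar_vec_hom: "polar_vec C r x = polar_vec C r y \<longleftrightarrow> polar_vec C r (x - y) = polar_vec C r 0"
  by (simp add: polar_vec_diff polar_vec_zero)

lemma card_radical_le:
  "card (radical C) \<le> CARD('k) ^ CARD('d1) * card {h \<in> fibre 0. polar_vec C r h = polar_vec C r 0}"
proof -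
  let ?K = "{v. \<Gamma>1 v = 0}" and ?H = "polar_vec C r"
  \<comment> \<open>testing the radical against the vectors \<open>axis r k\<close> places \<open>?H h\<close> in \<open>perp ?K\<close>\<close>
  have "radical C \<subseteq> {h \<in> fibre 0. ?H h \<in> perp ?K}"
  proof
    fix h assume h: "h \<in> radical C"
    have "dotp (?H h) k = 0" if "k \<in> ?K" for k
    proof -
      have "polar C (axis r k) h = 0"
        using h axis_mem_fibre_0[of k r] that unfolding radical_def by blast
      then show ?thesis by (simp add: polar_axis_left dotp_comm)
    qed
    then show "h \<in> {h \<in> fibre 0. ?H h \<in> perp ?K}" using h unfolding radical_def perp_def by blast
  qed
  then have "card (radical C) \<le> card {h \<in> fibre 0. ?H h \<in> perp ?K}"
    by (rule card_mono[rotated]) simp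
  also have "\<dots> \<le> card (perp ?K) * card {h \<in> fibre 0. ?H h = ?H 0}"
    by (rule card_preimage_le_card_mult_card_kernel)
      (rule finite zero_mem_fibre_0 diff_mem_fibre_0 polar_vec_hom | assumption)+
  finally show ?thesis by (simp add: card_perp_kernel)
qed

lemma card_fibre_0_eq:
  "card (fibre 0) = card (polar_vec C r ` fibre 0) * card {h \<in> fibre 0. polar_vec C r h = polar_vec C r 0}"
  by (rule card_eq_card_image_mult_card_kernel)
    (rule finite zero_mem_fibre_0 diff_mem_fibre_0 polar_vec_hom | assumption)+

lemma card_image_form_comb_le:
  "card (form_comb (\<chi> j. \<Sum>i\<in>UNIV. C$i$j * (\<gamma> i $ r * \<gamma> i $ s)) ` {v. \<Gamma>1 v = 0})
    \<le> card (polar_vec C r ` fibre 0)"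
  (is "card (?T ` ?K) \<le> card (?H ` _)")
proof -
  \<comment> \<open>on the vectors \<open>axis s k\<close>, \<open>?H\<close> takes the values \<open>2 *s ?T k\<close>\<close>
  have "(*s) 2 ` ?T ` ?K \<subseteq> ?H ` fibre 0"
    using axis_mem_fibre_0 by (auto simp: polar_vec_axis intro!: image_eqI[where x="axis s _"])
  then have "card ((*s) 2 ` ?T ` ?K) \<le> card (?H ` fibre 0)" by (rule card_mono[rotated]) simp
  moreover have "inj ((*s) (2::'k) :: 'k^'n \<Rightarrow> 'k^'n)"
    by (rule injI) (simp add: vec_eq_iff two_neq_zero)
  ultimately show ?thesis by (simp add: card_image inj_on_subset)
qed

lemma card_range_form_comb_ge:
  assumes "r \<le> vec.dim (range (form_comb c))"
  shows "CARD('k) ^ r \<le> card (range (form_comb c))"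
proof -
  have "card (range (form_comb c)) = CARD('k) ^ vec.dim (range (form_comb c))"
    by (rule card_subspace[OF subspace_range_linear[OF linear_form_comb]])
  moreover have "CARD('k) ^ r \<le> CARD('k) ^ vec.dim (range (form_comb c))"
    using assms by (intro power_increasing) simp_all
  ultimately show ?thesis by simp
qed

lemma card_radical_mult_le:
  assumes "r \<le> vec.dim (range (form_comb (\<chi> j. \<Sum>i\<in>UNIV. C$i$j * (\<gamma> i $ r0 * \<gamma> i $ s0))))"
  shows "card (radical C) * CARD('k) ^ r \<le> card (fibre 0) * CARD('k) ^ (2 * CARD('d1))"
proof -
  let ?p = "CARD('k)" and ?T = "form_comb (\<chi> j. \<Sum>i\<in>UNIV. C$i$j * (\<gamma> i $ r0 * \<gamma> i $ s0))"
  let ?H = "polar_vec C r0"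
  have "?p ^ r \<le> card (range ?T)"
    using assms by (rule card_range_form_comb_ge)
  also have "\<dots> \<le> ?p ^ CARD('d1) * card (?T ` {v. \<Gamma>1 v = 0})"
    by (rule card_range_le_card_image_kernel) (simp add: vec.linear_add[OF linear_form_comb])
  also have "\<dots> \<le> ?p ^ CARD('d1) * card (?H ` fibre 0)"
    using card_image_form_comb_le by simp
  finally have "card (radical C) * ?p ^ r
      \<le> (?p ^ CARD('d1) * card {h \<in> fibre 0. ?H h = ?H 0}) * (?p ^ CARD('d1) * card (?H ` fibre 0))"
    using card_radical_le by (rule mult_le_mono[rotated])
  then show ?thesis
    by (simp add: card_fibre_0_eq[of C r0] power_mult power2_eq_square mult_ac)
qed

lemma norm_sum_fibre_le:
  assumes "square_independent \<gamma>" and "quad_rank_at_least \<Gamma>2 r"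
    and "C \<noteq> 0" and "a \<in> range lin_map"
  shows "norm (\<Sum>x\<in>fibre a. add_char (pairing C (quad_map x)))
    \<le> card (fibre 0) * real CARD('k) powr (real CARD('d1) - real r / 2)"
proof -
  obtain r0 s0 where c: "(\<chi> j. \<Sum>i\<in>UNIV. C$i$j * (\<gamma> i $ r0 * \<gamma> i $ s0)) \<noteq> 0"
    using square_independent_nonzero_coefficients[OF assms(1,3)] .
  have "card (radical C) * CARD('k) ^ r \<le> card (fibre 0) * CARD('k) ^ (2 * CARD('d1))"
    by (rule card_radical_mult_le[OF dim_range_form_comb_ge[OF assms(2) c]])
  then have radical_le: "real (card (radical C)) * real CARD('k) ^ r
      \<le> real (card (fibre 0)) * real CARD('k) ^ (2 * CARD('d1))"
    by (metis of_nat_le_iff of_nat_mult of_nat_power)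
  have "(norm (\<Sum>x\<in>fibre a. add_char (pairing C (quad_map x))))\<^sup>2
      \<le> card (fibre a) * card {h \<in> fibre 0. \<forall>w\<in>fibre 0. polar C w h = 0}"
  proof (rule \<psi>.norm_sum_quadratic_squared_le)
    show "y + h \<in> fibre a \<longleftrightarrow> h \<in> fibre 0" if "y \<in> fibre a" for y h
      using that by (auto simp: fibre_def lin_map_add)
    show "- w \<in> fibre 0" if "w \<in> fibre 0" for w
      using that by (simp add: fibre_def lin_map_uminus)
  qed (simp_all add: pairing_quad_map_add polar_add_left)
  then have "(norm (\<Sum>x\<in>fibre a. add_char (pairing C (quad_map x))))\<^sup>2
      \<le> real (card (fibre 0)) * real (card (radical C))"
    by (simp add: card_fibre[OF assms(4)] radical_def)
  then show ?thesis
    using radical_le by (rule le_mult_powr_of_square_le) simp_all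
qed

lemma card_fibre_quad_map_estimate:
  assumes "square_independent \<gamma>" and "quad_rank_at_least \<Gamma>2 r" and "a \<in> range lin_map"
  defines "G \<equiv> CARD(('k^'d2)^'m)" and "w \<equiv> card (fibre 0)"
  shows "\<bar>real G * card {x \<in> fibre a. quad_map x = b} - real w\<bar>
    \<le> (real G - 1) * (w * real CARD('k) powr (real CARD('d1) - real r / 2))"
proof -
  define S where "S C = (\<Sum>x\<in>fibre a. add_char (pairing C (quad_map x)))" for C
  define E where "E = real G * card {x \<in> fibre a. quad_map x = b} - real w"
  have orthogonality: "(\<Sum>C\<in>UNIV. add_char (pairing C v)) = (if v = 0 then of_nat G else 0)"
    for v :: "('k^'d2)^'m"
    unfolding G_def by (rule \<psi>.sum_nondegenerate_pairing) (simp_all add: pairing_add_left pairing_nondegenerate)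
  \<comment> \<open>detect \<open>quad_map x = b\<close> by summing the character over all dual vectors \<open>C\<close>\<close>
  have "of_nat G * of_nat (card {x \<in> fibre a. quad_map x = b})
      = (\<Sum>x\<in>fibre a. if quad_map x = b then (of_nat G :: complex) else 0)"
    by (simp add: sum.inter_filter[symmetric] sum_distrib_left)
  also have "\<dots> = (\<Sum>x\<in>fibre a. \<Sum>C\<in>UNIV. add_char (pairing C (quad_map x - b)))"
    by (rule sum.cong) (simp_all add: orthogonality)
  also have "\<dots> = (\<Sum>x\<in>fibre a. \<Sum>C\<in>UNIV. cnj (add_char (pairing C b)) * add_char (pairing C (quad_map x)))"
    by (simp add: pairing_diff_right \<psi>.diff mult.commute)
  also have "\<dots> = (\<Sum>C\<in>UNIV. cnj (add_char (pairing C b)) * S C)"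
    unfolding S_def by (subst sum.swap) (simp only: sum_distrib_left)
  also have "\<dots> = cnj (add_char (pairing 0 b)) * S 0 + (\<Sum>C\<in>UNIV - {0}. cnj (add_char (pairing C b)) * S C)"
    by (rule sum.remove) simp_all
  also have "cnj (add_char (pairing 0 b)) * S 0 = of_nat w"
    unfolding S_def w_def by (simp add: \<psi>.zero card_fibre[OF assms(3)])
  finally have "complex_of_real E = (\<Sum>C\<in>UNIV - {0}. cnj (add_char (pairing C b)) * S C)"
    unfolding E_def by simp
  then have "\<bar>E\<bar> = norm (\<Sum>C\<in>UNIV - {0}. cnj (add_char (pairing C b)) * S C)"
    by (metis norm_of_real)
  also have "\<dots> \<le> (\<Sum>C\<in>UNIV - {0}. norm (S C))"
    using norm_sum[of "\<lambda>C. cnj (add_char (pairing C b)) * S C" "UNIV - {0}"]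
    by (simp add: norm_mult \<psi>.norm_eq_1)
  also have "\<dots> \<le> (\<Sum>C\<in>(UNIV :: (('k^'d2)^'m) set) - {0}.
      w * real CARD('k) powr (real CARD('d1) - real r / 2))"
  proof (rule sum_mono)
    fix C :: "('k^'d2)^'m" assume "C \<in> UNIV - {0}"
    then show "norm (S C) \<le> w * real CARD('k) powr (real CARD('d1) - real r / 2)"
      unfolding S_def w_def using norm_sum_fibre_le[OF assms(1,2) _ assms(3)] by simp
  qed
  also have "\<dots> = (real G - 1) * (w * real CARD('k) powr (real CARD('d1) - real r / 2))"
    unfolding G_def by (simp add: card_Diff_singleton of_nat_diff)
  finally show ?thesis unfolding E_def .
qed

lemma probability_estimate:
  assumes "square_independent \<gamma>" and "quad_rank_at_least \<Gamma>2 r" and "a \<in> range lin_map"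
  shows "\<bar>card {x \<in> fibre a. quad_map x = b} / real CARD(('k^'n)^'d)
      - real CARD('k) powr - (real CARD('d1) * real (vec.dim (range \<gamma>)) + real CARD('d2) * real CARD('m))\<bar>
    \<le> real CARD('k) powr (real CARD('d1) - real (vec.dim (range \<gamma>)) * real CARD('d1) - real r / 2)"
proof -
  let ?p = "real CARD('k)" and ?e = "vec.dim (range \<gamma>) * CARD('d1)" and ?f = "CARD('d2) * CARD('m)"
  let ?w = "real (card (fibre 0))" and ?X = "?p powr (real CARD('d1) - real r / 2)"
  have "CARD(('k^'n)^'d) = CARD('k) ^ ?e * card (fibre 0)"
    using card_UNIV_eq_card_range_mult_card_fibre_0 by (simp only: card_range_lin_map)
  then have card_UNIV: "real CARD(('k^'n)^'d) = ?p ^ ?e * ?w" by simp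
  have "card (fibre 0) > 0"
    by (rule card_gt_0_iff[THEN iffD2]) (auto simp: fibre_def lin_map_zero intro!: exI[of _ 0])
  moreover have "\<bar>?p ^ ?f * card {x \<in> fibre a. quad_map x = b} - ?w\<bar> \<le> (?p ^ ?f - 1) * (?w * ?X)"
    using card_fibre_quad_map_estimate[OF assms, of b] by (simp add: power_mult)
  ultimately have "\<bar>card {x \<in> fibre a. quad_map x = b} / (?p ^ ?e * ?w) - ?p powr - real (?e + ?f)\<bar>
      \<le> ?X / ?p ^ ?e"
    by (intro normalized_error_le) simp_all
  moreover have "?X / ?p ^ ?e = ?p powr ((real CARD('d1) - real r / 2) - real ?e)"
    by (simp only: powr_diff powr_realpow[of ?p] zero_less_card_finite of_nat_0_less_iff)
  moreover have "(real CARD('d1) - real r / 2) - real ?e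
      = real CARD('d1) - real (vec.dim (range \<gamma>)) * real CARD('d1) - real r / 2"
    by simp
  ultimately show ?thesis unfolding card_UNIV by (simp add: algebra_simps)
qed

end

theorem lemma3p8:
  fixes \<gamma> :: "'m::finite \<Rightarrow> 'k::{field,finite} ^ 'd"
    and \<Gamma>1 :: "'k ^ 'n \<Rightarrow> 'k ^ 'd1"
    and \<Gamma>2 :: "'k ^ 'n \<Rightarrow> 'k ^ 'd2"
    and a :: "'m \<Rightarrow> 'k ^ 'd1"
    and b :: "'m \<Rightarrow> 'k ^ 'd2"
    and r :: nat
  assumes p_prime: "prime CARD('k)"
    and p_odd: "odd CARD('k)"
    and sqind: "square_independent \<gamma>"
    and lin1: "Vector_Spaces.linear (*s) (*s) \<Gamma>1"
    and surj1: "surj \<Gamma>1"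
    and quad2: "is_quadratic_map \<Gamma>2"
    and rank2: "quad_rank_at_least \<Gamma>2 r"
  defines "p \<equiv> CARD('k)"
    and "d1 \<equiv> CARD('d1)"
    and "d2 \<equiv> CARD('d2)"
    and "m \<equiv> CARD('m)"
    and "d' \<equiv> vec.dim (range \<gamma>)"
    and "Z \<equiv> {c :: 'm \<Rightarrow> 'k ^ 'd1. \<forall>\<mu> :: 'm \<Rightarrow> 'k.
                 (\<Sum>i\<in>UNIV. \<mu> i *s \<gamma> i) = 0 \<longrightarrow> (\<Sum>i\<in>UNIV. \<mu> i *s c i) = 0}"
    and "P \<equiv> real (card {x :: ('k ^ 'n) ^ 'd. \<forall>i. \<Gamma>1 (lin_form_apply (\<gamma> i) x) = a i
                                              \<and> \<Gamma>2 (lin_form_apply (\<gamma> i) x) = b i})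
             / real (card (UNIV :: (('k ^ 'n) ^ 'd) set))"
  shows "(a \<notin> Z \<longrightarrow> P = 0) \<and>
         (a \<in> Z \<longrightarrow> \<bar>P - real p powr (- (real d1 * real d' + real d2 * real m))\<bar>
                     \<le> real p powr (real d1 - real d' * real d1 - real r / 2))"
proof -
  have "\<forall>j. \<exists>A::'k^'n^'n. transpose A = A \<and> (\<forall>x. \<Gamma>2 x $ j = (\<Sum>i\<in>UNIV. \<Sum>k\<in>UNIV. x$i * A$i$k * x$k))"
    using quad2 unfolding is_quadratic_map_def is_quadratic_form_def by blast
  then obtain M :: "'d2 \<Rightarrow> 'k^'n^'n" where symmetric: "\<And>j. transpose (M j) = M j"
    and \<Gamma>2_eq: "\<And>j x. \<Gamma>2 x $ j = (\<Sum>i\<in>UNIV. \<Sum>k\<in>UNIV. x$i * M j$i$k * x$k)"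
    by (auto dest!: choice)
  interpret quadratic_system \<gamma> \<Gamma>1 \<Gamma>2 M
    by (intro quadratic_system.intro linear_system.intro quadratic_system_axioms.intro)
      (rule lin1 surj1 symmetric \<Gamma>2_eq p_prime p_odd)+
  have Z_eq: "Z = range lin_map"
    unfolding Z_def range_lin_map ..
  have event_eq: "{x. \<forall>i. \<Gamma>1 (lin_form_apply (\<gamma> i) x) = a i \<and> \<Gamma>2 (lin_form_apply (\<gamma> i) x) = b i}
      = {x \<in> fibre a. quad_map x = (\<chi> i. b i)}"
    by (auto simp: fibre_def lin_map_def quad_map_def fun_eq_iff vec_eq_iff)
  show ?thesis
  proof (intro conjI impI)
    assume "a \<notin> Z"
    then have "fibre a = {}" unfolding Z_eq fibre_def by auto
    then show "P = 0" unfolding P_def event_eq by simp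
  next
    assume "a \<in> Z"
    then show "\<bar>P - real p powr (- (real d1 * real d' + real d2 * real m))\<bar>
        \<le> real p powr (real d1 - real d' * real d1 - real r / 2)"
      using probability_estimate[OF sqind rank2, of a "\<chi> i. b i"]
      unfolding P_def event_eq p_def d1_def d2_def m_def d'_def Z_eq by simp
  qed
qed

end
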